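(* Let $h>0$ and $0\le \alpha<1/4$. In the planar setting described in the context, let $g\in G$ be any target point. Then there exist two camera locations $s_p,s_q\in S$ such that $$\varepsilon(g,\{s_p,s_q\})\;\le\;\sqrt{\frac{1+2\alpha}{1-4\alpha}}\;\varepsilon(g,S).$$
   Context: Work in $\mathbb{R}^2$ with coordinates $(x,z)$. The ground line is $G=\{z=0\}$ and the viewing line is $S=\{z=h\}$, $h>0$. Fix an error bound $\alpha>0$ (radians). For a point $s$ and a unit vector $u$, the wedge $W(s,u)=\{s+rv:\ r\ge 0,\ |v|=1,\ \angle(v,u)\le\alpha\}$; it has apex $s$ and opening angle $2\alpha$. For a target $g$ and a camera location $s$, let $\mathcal W(g,s)$ be the set of all wedges $W(s,u)$, over all unit vectors $u$, that contain $g$. For a set $C\subseteq S$ of camera locations, the worst-case uncertainty is $$\varepsilon(g,C)=\sup\Big\{\operatorname{diam}\Big(\bigcap_{s\in C}W_s\Big):\ W_s\in\mathcal W(g,s)\ \text{for every } s\in C\Big\},$$ i.e. one wedge is chosen per camera so as to jointly maximize the diameter of the intersection. $\varepsilon(g,S)$ is the worst-case uncertainty obtained using all points of $S$ as cameras. *)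

theory Defs
  imports "HOL-Analysis.Analysis"
begin

type_synonym pt = "real \<times> real"

definition vec_angle :: "pt \<Rightarrow> pt \<Rightarrow> real" where
  "vec_angle v u = arccos ((v \<bullet> u) / (norm v * norm u))"

definition ground :: "pt set" where
  "ground = {p. snd p = 0}"

definition viewline :: "real \<Rightarrow> pt set" where
  "viewline h = {p. snd p = h}"

text \<open>The wedge W(s,u) with apex s, axis u and half-opening angle alpha.\<close>
definition wedge :: "real \<Rightarrow> pt \<Rightarrow> pt \<Rightarrow> pt set" where
  "wedge \<alpha> s u = {s + r *\<^sub>R v | r v. r \<ge> 0 \<and> norm v = 1 \<and> vec_angle v u \<le> \<alpha>}"

definition wedges_through :: "real \<Rightarrow> pt \<Rightarrow> pt \<Rightarrow> pt set set" where
  "wedges_through \<alpha> g s = {wedge \<alpha> s u | u. norm u = 1 \<and> g \<in> wedge \<alpha> s u}"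

text \<open>Diameter as an extended real (infinite for unbounded sets).\<close>
definition ediam :: "pt set \<Rightarrow> ereal" where
  "ediam A = (SUP p\<in>A \<times> A. ereal (dist (fst p) (snd p)))"

definition uncertainty :: "real \<Rightarrow> pt \<Rightarrow> pt set \<Rightarrow> ereal" where
  "uncertainty \<alpha> g C =
     (SUP W\<in>{W :: pt \<Rightarrow> pt set. \<forall>s\<in>C. W s \<in> wedges_through \<alpha> g s}.
        ediam (\<Inter>s\<in>C. W s))"

end

theory Submission
  imports Defs
begin

text \<open>Put the cameras at \<open>(g\<^sub>x \<mp> h, h)\<close>, from where \<open>g\<close> is seen along perpendicular lines.
  With \<open>T = tan 2\<alpha>\<close>, every wedge of half-angle \<open>\<alpha>\<close> through \<open>g\<close> lies in a sector around the
  line of sight whose slopes span an interval of length at most \<open>T\<close>; two such perpendicular sectors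
  meet in a set of diameter at most \<open>2hT/(1 - T)\<close>. Conversely, every camera on \<open>S\<close> sees \<open>g\<close> and
  \<open>(g\<^sub>x, -2hT(1 + T))\<close> under an angle at most \<open>2\<alpha>\<close>, so some wedge of that camera contains
  both points and \<open>\<epsilon>(g, S) \<ge> 2hT(1 + T)\<close>. The bounds differ by the factor \<open>1/(1 - T\<^sup>2)\<close>,
  which \<open>tan 2\<alpha> \<le> 16\<alpha>/7\<close> keeps below the claimed constant for \<open>\<alpha> < 1/4\<close>.\<close>

lemma vec_angle_le_iff:
  assumes "norm v = 1" "norm u = 1" "0 \<le> \<alpha>" "\<alpha> \<le> pi"
  shows "vec_angle v u \<le> \<alpha> \<longleftrightarrow> cos \<alpha> \<le> v \<bullet> u"
proof -
  have b: "\<bar>v \<bullet> u\<bar> \<le> 1" using Cauchy_Schwarz_ineq2[of v u] assms by simp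
  have va: "vec_angle v u = arccos (v \<bullet> u)" using assms by (simp add: vec_angle_def)
  show ?thesis
  proof
    assume "vec_angle v u \<le> \<alpha>"
    then have "cos \<alpha> \<le> cos (arccos (v \<bullet> u))"
      using va assms arccos_lbound[of "v \<bullet> u"] b by (intro cos_monotone_0_pi_le) auto
    then show "cos \<alpha> \<le> v \<bullet> u" using b by (simp add: cos_arccos_abs)
  next
    assume "cos \<alpha> \<le> v \<bullet> u"
    then have "arccos (v \<bullet> u) \<le> arccos (cos \<alpha>)" using b by (intro arccos_le_arccos) auto
    then show "vec_angle v u \<le> \<alpha>" using va assms arccos_cos by simp
  qed
qed

lemma mem_wedge_iff:
  assumes u: "norm u = 1" and \<alpha>: "0 \<le> \<alpha>" "\<alpha> \<le> pi"
  shows "x \<in> wedge \<alpha> s u \<longleftrightarrow> cos \<alpha> * norm (x - s) \<le> (x - s) \<bullet> u"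
proof
  assume "x \<in> wedge \<alpha> s u"
  then obtain r v where x: "x - s = r *\<^sub>R v" "r \<ge> 0" "norm v = 1" "vec_angle v u \<le> \<alpha>"
    unfolding wedge_def by auto
  then have "r * cos \<alpha> \<le> r * (v \<bullet> u)"
    using vec_angle_le_iff u \<alpha> by (intro mult_left_mono) auto
  then show "cos \<alpha> * norm (x - s) \<le> (x - s) \<bullet> u"
    using x by (simp add: mult.commute)
next
  assume le: "cos \<alpha> * norm (x - s) \<le> (x - s) \<bullet> u"
  show "x \<in> wedge \<alpha> s u"
  proof (cases "x = s")
    case True
    have "u \<bullet> u = 1" using u power2_norm_eq_inner[of u] by simp
    then have "vec_angle u u \<le> \<alpha>" using u \<alpha> by (simp add: vec_angle_def)
    moreover have "x = s + 0 *\<^sub>R u" using True by simp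
    ultimately show ?thesis using u unfolding wedge_def by blast
  next
    case False
    define v where "v = (1 / norm (x - s)) *\<^sub>R (x - s)"
    have v: "norm v = 1" "x = s + norm (x - s) *\<^sub>R v" using False by (auto simp: v_def)
    have "cos \<alpha> \<le> v \<bullet> u" using le False by (simp add: v_def pos_le_divide_eq mult.commute)
    then have "vec_angle v u \<le> \<alpha>" using vec_angle_le_iff v(1) u \<alpha> by blast
    then show ?thesis using v norm_ge_zero unfolding wedge_def by blast
  qed
qed

lemma ediam_le:
  assumes "\<And>x y. x \<in> A \<Longrightarrow> y \<in> A \<Longrightarrow> dist x y \<le> r"
  shows "ediam A \<le> ereal r"
  unfolding ediam_def using assms by (auto intro!: SUP_least)

lemma dist_le_ediam: "x \<in> A \<Longrightarrow> y \<in> A \<Longrightarrow> ereal (dist x y) \<le> ediam A"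
  unfolding ediam_def by (rule SUP_upper2[of "(x, y)"]) auto

lemma uncertainty_le:
  assumes "\<And>W. \<forall>s\<in>C. W s \<in> wedges_through \<alpha> g s \<Longrightarrow> ediam (\<Inter>s\<in>C. W s) \<le> r"
  shows "uncertainty \<alpha> g C \<le> r"
  unfolding uncertainty_def using assms by (auto intro!: SUP_least)

lemma ediam_le_uncertainty:
  "\<forall>s\<in>C. W s \<in> wedges_through \<alpha> g s \<Longrightarrow> ediam (\<Inter>s\<in>C. W s) \<le> uncertainty \<alpha> g C"
  unfolding uncertainty_def by (rule SUP_upper) simp

definition rot :: "pt \<Rightarrow> pt" where
  "rot p = (- snd p, fst p)"

lemma inner_frame:
  "(y \<bullet> u) * (d \<bullet> u) + (y \<bullet> rot u) * (d \<bullet> rot u) = (y \<bullet> d) * (norm u)^2"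
  by (cases y, cases d, cases u) (simp add: rot_def norm_Pair power2_eq_square algebra_simps)

lemma inner_rot_frame:
  "(y \<bullet> rot u) * (d \<bullet> u) - (y \<bullet> u) * (d \<bullet> rot u) = (y \<bullet> rot d) * (norm u)^2"
  by (cases y, cases d, cases u) (simp add: rot_def norm_Pair power2_eq_square algebra_simps)

lemma norm_mult_norm_eq: "norm a * norm b = sqrt ((a \<bullet> b)^2 + (a \<bullet> rot b)^2)"
  using inner_frame[of a b a] by (simp add: power2_eq_square real_sqrt_mult flip: power2_norm_eq_inner)

lemma cos_mult_sqrt_le_iff:
  fixes c s p q :: real
  assumes c: "0 \<le> c" and s: "0 \<le> s" and cs: "c^2 + s^2 = 1"
  shows "c * sqrt (p^2 + q^2) \<le> p \<longleftrightarrow> 0 \<le> p \<and> c * \<bar>q\<bar> \<le> s * p"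
proof (cases "0 \<le> p")
  case True
  have "(s * p)^2 = (c^2 + s^2) * p^2 - c^2 * p^2" by (simp add: power_mult_distrib algebra_simps)
  then have sp: "(s * p)^2 = p^2 - c^2 * p^2" using cs by simp
  have "c * sqrt (p^2 + q^2) \<le> p \<longleftrightarrow> sqrt (c^2 * (p^2 + q^2)) \<le> sqrt (p^2)"
    using c True by (simp add: real_sqrt_mult)
  also have "\<dots> \<longleftrightarrow> (c * q)^2 \<le> (s * p)^2"
    unfolding real_sqrt_le_iff sp by (simp add: power_mult_distrib algebra_simps)
  also have "\<dots> \<longleftrightarrow> c * \<bar>q\<bar> \<le> s * p"
    using c s True by (simp add: abs_le_square_iff[symmetric] abs_mult)
  finally show ?thesis using True by simp
next
  case False
  moreover have "0 \<le> c * sqrt (p^2 + q^2)" using c by simp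
  ultimately show ?thesis by linarith
qed

lemma mem_wedge_iff_slope:
  assumes u: "norm u = 1" and \<alpha>: "0 \<le> \<alpha>" "\<alpha> \<le> pi/2"
  shows "x \<in> wedge \<alpha> s u \<longleftrightarrow>
    0 \<le> (x - s) \<bullet> u \<and> cos \<alpha> * \<bar>(x - s) \<bullet> rot u\<bar> \<le> sin \<alpha> * ((x - s) \<bullet> u)"
proof -
  have "norm (x - s) = sqrt (((x - s) \<bullet> u)^2 + ((x - s) \<bullet> rot u)^2)"
    using norm_mult_norm_eq[of "x - s" u] u by simp
  moreover have "0 \<le> cos \<alpha>" "0 \<le> sin \<alpha>" using \<alpha> by (auto intro: cos_ge_zero sin_ge_zero)
  ultimately show ?thesis
    using mem_wedge_iff[OF u] \<alpha> cos_mult_sqrt_le_iff[of "cos \<alpha>" "sin \<alpha>"] by simp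
qed

lemma trig_below_quarter_pi:
  assumes "0 \<le> \<alpha>" "\<alpha> < pi/4"
  shows "0 < cos \<alpha>" and "0 \<le> sin \<alpha>" and "(sin \<alpha>)^2 < (cos \<alpha>)^2"
    and "tan (2*\<alpha>) = 2 * cos \<alpha> * sin \<alpha> / ((cos \<alpha>)^2 - (sin \<alpha>)^2)"
proof -
  show "0 < cos \<alpha>" using assms by (intro cos_gt_zero_pi) auto
  show "0 \<le> sin \<alpha>" using assms by (intro sin_ge_zero) auto
  have "0 < cos (2*\<alpha>)" using assms by (intro cos_gt_zero_pi) auto
  then show "(sin \<alpha>)^2 < (cos \<alpha>)^2" by (simp add: cos_double)
  show "tan (2*\<alpha>) = 2 * cos \<alpha> * sin \<alpha> / ((cos \<alpha>)^2 - (sin \<alpha>)^2)"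
    unfolding tan_def sin_double cos_double by (simp add: mult_ac)
qed

lemma sector_denominators_pos:
  fixes c s e f :: real
  assumes c: "0 < c" and s: "0 \<le> s" and cs: "s^2 < c^2" and d: "0 < e" "c * \<bar>f\<bar> \<le> s * e"
  shows "0 < c*e - s*f" and "0 < c*e + s*f"
proof -
  have "\<bar>s * c * f\<bar> = s * (c * \<bar>f\<bar>)" using c s by (simp add: abs_mult mult.assoc)
  also have "\<dots> \<le> s * (s * e)" using d(2) s by (rule mult_left_mono)
  finally have scf: "s * c * f \<le> s * s * e" "- (s * c * f) \<le> s * s * e"
    by (simp_all add: abs_le_iff mult.assoc)
  have "0 < (c^2 - s^2) * e" using cs d(1) by simp
  then have pos: "0 < c * c * e - s * s * e" by (simp add: power2_eq_square algebra_simps)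
  have "c * (s * f) < c * (c * e)" "c * (- (s * f)) < c * (c * e)"
    using pos scf by (simp_all add: algebra_simps)
  then have "s * f < c * e" "- (s * f) < c * e" using mult_less_cancel_left_pos[OF c] by blast+
  then show "0 < c*e - s*f" "0 < c*e + s*f" by linarith+
qed

text \<open>With \<open>c = cos \<alpha>\<close>, \<open>s = sin \<alpha>\<close> and \<open>(e, f)\<close> the coordinates of a direction at angle \<open>\<psi>\<close>
  from the axis of a wedge, \<open>a = tan (- \<alpha> - \<psi>)\<close> and \<open>b = tan (\<alpha> - \<psi>)\<close> are the slopes of the
  wedge's edges relative to that direction.\<close>

lemma sector_slope_interval:
  fixes c s e f :: real
  assumes c: "0 < c" and s: "0 \<le> s" and cs: "s^2 < c^2" and d: "0 < e" "c * \<bar>f\<bar> \<le> s * e"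
  defines "a \<equiv> - (s*e + c*f) / (c*e - s*f)" and "b \<equiv> (s*e - c*f) / (c*e + s*f)"
  shows "a \<le> 0" and "0 \<le> b" and "b - a \<le> 2*c * s / (c^2 - s^2)"
proof -
  note den = sector_denominators_pos[OF c s cs d]
  have cf: "\<bar>c * f\<bar> \<le> s * e" using d(2) c by (simp add: abs_mult)
  then show "a \<le> 0" "0 \<le> b"
    unfolding a_def b_def using den by (auto intro: divide_nonpos_pos divide_nonneg_pos simp: abs_le_iff)
  define D where "D = (c*e + s*f) * (c*e - s*f)"
  have D: "(c^2 - s^2) * (e^2 + f^2) \<le> D"
  proof -
    have "(c * f)^2 \<le> (s * e)^2" using cf d(1) s by (simp add: abs_le_square_iff[symmetric])
    then show ?thesis unfolding D_def by (simp add: power2_eq_square algebra_simps)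
  qed
  have "b - a = ((s*e - c*f) * (c*e - s*f) + (s*e + c*f) * (c*e + s*f)) / D"
    using den unfolding a_def b_def D_def by (simp add: field_simps)
  also have "\<dots> = 2*c * s * (e^2 + f^2) / D" by (simp add: power2_eq_square algebra_simps)
  also have "\<dots> \<le> 2*c * s * (e^2 + f^2) / ((c^2 - s^2) * (e^2 + f^2))"
  proof (rule divide_left_mono)
    have "0 < (c^2 - s^2) * (e^2 + f^2)" using cs d(1) by (simp add: add_pos_nonneg)
    then show "0 < D * ((c^2 - s^2) * (e^2 + f^2))" using D by simp
  qed (use D c s in auto)
  also have "\<dots> = 2*c * s / (c^2 - s^2)" using d(1) by simp
  finally show "b - a \<le> 2*c * s / (c^2 - s^2)" .
qed

definition in_sector :: "real \<Rightarrow> real \<Rightarrow> real \<Rightarrow> real \<Rightarrow> bool" where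
  "in_sector a b A B \<longleftrightarrow> 0 \<le> A \<and> a * A \<le> B \<and> B \<le> b * A"

lemma sector_slope_mem:
  fixes c s p q e f :: real
  assumes c: "0 < c" and s: "0 \<le> s" and cs: "s^2 < c^2"
    and y: "0 \<le> p" "c * \<bar>q\<bar> \<le> s * p" and d: "0 < e" "c * \<bar>f\<bar> \<le> s * e"
  defines "a \<equiv> - (s*e + c*f) / (c*e - s*f)" and "b \<equiv> (s*e - c*f) / (c*e + s*f)"
  shows "in_sector a b (p*e + q*f) (q*e - p*f)"
  unfolding in_sector_def
proof (intro conjI)
  note den = sector_denominators_pos[OF c s cs d]
  have nonneg: "0 \<le> X" if "0 < D" "0 \<le> D * X" for D X :: real
    using that by (metis linorder_not_less mult_pos_neg)
  have cq: "\<bar>c * q\<bar> \<le> s * p" and cf: "\<bar>c * f\<bar> \<le> s * e" using y(2) d(2) c by (simp_all add: abs_mult)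
  have "\<bar>(c*q) * (c*f)\<bar> \<le> (s*p) * (s*e)"
    unfolding abs_mult[of "c*q"] using cq cf by (intro mult_mono) auto
  moreover have "0 \<le> (c^2 - s^2) * (p * e)" using cs y(1) d(1) by simp
  moreover have "c^2 * (p*e + q*f) = (c^2 - s^2) * (p*e) + ((s*p) * (s*e) + (c*q) * (c*f))"
    by (simp add: power2_eq_square algebra_simps)
  ultimately have "0 \<le> c^2 * (p*e + q*f)" by (simp add: abs_le_iff)
  then show "0 \<le> p*e + q*f" using c by (simp add: zero_le_mult_iff)
  have eq_a: "(c*e - s*f) * ((q*e - p*f) - a * (p*e + q*f)) = (e^2 + f^2) * (s*p + c*q)"
    using den unfolding a_def by (simp add: field_simps) (simp add: power2_eq_square algebra_simps)
  have "0 \<le> (e^2 + f^2) * (s*p + c*q)" using cq by (simp add: abs_le_iff)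
  then have "0 \<le> (q*e - p*f) - a * (p*e + q*f)" unfolding eq_a[symmetric] by (rule nonneg[OF den(1)])
  then show "a * (p*e + q*f) \<le> q*e - p*f" by simp
  have eq_b: "(c*e + s*f) * (b * (p*e + q*f) - (q*e - p*f)) = (e^2 + f^2) * (s*p - c*q)"
    using den unfolding b_def by (simp add: field_simps) (simp add: power2_eq_square algebra_simps)
  have "0 \<le> (e^2 + f^2) * (s*p - c*q)" using cq by (simp add: abs_le_iff)
  then have "0 \<le> b * (p*e + q*f) - (q*e - p*f)" unfolding eq_b[symmetric] by (rule nonneg[OF den(2)])
  then show "q*e - p*f \<le> b * (p*e + q*f)" by simp
qed

lemma wedge_subset_sector:
  assumes u: "norm u = 1" and g: "g \<in> wedge \<alpha> s u" "g \<noteq> s" and \<alpha>: "0 \<le> \<alpha>" "\<alpha> < pi/4"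
  obtains a b where "a \<le> 0" and "0 \<le> b" and "b - a \<le> tan (2*\<alpha>)"
    and "\<And>x. x \<in> wedge \<alpha> s u \<Longrightarrow> in_sector a b ((x - s) \<bullet> (g - s)) ((x - s) \<bullet> rot (g - s))"
proof -
  note trig = trig_below_quarter_pi[OF \<alpha>]
  have \<alpha>': "\<alpha> \<le> pi/2" "\<alpha> \<le> pi" using \<alpha> by auto
  define e f where "e = (g - s) \<bullet> u" and "f = (g - s) \<bullet> rot u"
  have "cos \<alpha> * norm (g - s) \<le> e" using g(1) mem_wedge_iff[OF u \<alpha>(1) \<alpha>'(2)] by (simp add: e_def)
  moreover have "0 < cos \<alpha> * norm (g - s)" using g(2) trig(1) by simp
  ultimately have e: "0 < e" by linarith
  have f: "cos \<alpha> * \<bar>f\<bar> \<le> sin \<alpha> * e"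
    using g(1) mem_wedge_iff_slope[OF u \<alpha>(1) \<alpha>'(1)] by (simp add: e_def f_def)
  define a b where "a = - (sin \<alpha> * e + cos \<alpha> * f) / (cos \<alpha> * e - sin \<alpha> * f)"
    and "b = (sin \<alpha> * e - cos \<alpha> * f) / (cos \<alpha> * e + sin \<alpha> * f)"
  show thesis
  proof (rule that[of a b])
    show "a \<le> 0" "0 \<le> b" "b - a \<le> tan (2*\<alpha>)"
      using sector_slope_interval[OF trig(1,2,3) e f] trig(4) by (simp_all add: a_def b_def)
  next
    fix x assume "x \<in> wedge \<alpha> s u"
    then have x: "0 \<le> (x - s) \<bullet> u" "cos \<alpha> * \<bar>(x - s) \<bullet> rot u\<bar> \<le> sin \<alpha> * ((x - s) \<bullet> u)"
      using mem_wedge_iff_slope[OF u \<alpha>(1) \<alpha>'(1)] by simp_all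
    have P: "(x - s) \<bullet> (g - s) = ((x - s) \<bullet> u) * e + ((x - s) \<bullet> rot u) * f"
      using inner_frame[of "x - s" u "g - s"] u by (simp add: e_def f_def)
    have Q: "(x - s) \<bullet> rot (g - s) = ((x - s) \<bullet> rot u) * e - ((x - s) \<bullet> u) * f"
      using inner_rot_frame[of "x - s" u "g - s"] u by (simp add: e_def f_def)
    show "in_sector a b ((x - s) \<bullet> (g - s)) ((x - s) \<bullet> rot (g - s))"
      unfolding P Q a_def b_def by (rule sector_slope_mem[OF trig(1,2,3) x e f])
  qed
qed

lemma in_sector_scale:
  "0 < h \<Longrightarrow> in_sector a b (h * A) (h * B) \<longleftrightarrow> in_sector a b A B"
  by (simp add: in_sector_def zero_le_mult_iff mult.left_commute[of a h] mult.left_commute[of b h])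

lemma in_sector_diff_le:
  fixes a b T M :: real
  assumes ab: "a \<le> 0" "0 \<le> b" "b - a \<le> T"
    and 1: "in_sector a b A1 B1" "A1 \<le> M" and 2: "in_sector a b A2 B2" "A2 \<le> M"
  shows "\<bar>B1 - B2\<bar> \<le> T * M"
proof -
  have "0 \<le> M" using 1 by (simp add: in_sector_def)
  have "b * A1 \<le> b * M" "b * A2 \<le> b * M" using ab 1 2 by (simp_all add: mult_left_mono)
  moreover have "a * M \<le> a * A1" "a * M \<le> a * A2" using ab 1 2 by (simp_all add: mult_left_mono_neg)
  moreover have "(b - a) * M \<le> T * M" using ab(3) \<open>0 \<le> M\<close> by (rule mult_right_mono)
  ultimately show ?thesis using 1 2 by (simp add: in_sector_def algebra_simps abs_le_iff)
qed

lemma in_sector_abs_le: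
  fixes a b T A B :: real
  assumes ab: "a \<le> 0" "0 \<le> b" "b - a \<le> T" and AB: "in_sector a b A B"
  shows "\<bar>B\<bar> \<le> T * A"
proof -
  have A: "0 \<le> A" "a * A \<le> B" "B \<le> b * A" using AB by (simp_all add: in_sector_def)
  have "b \<le> T" "- a \<le> T" using ab by linarith+
  then have "b * A \<le> T * A" "(- a) * A \<le> T * A" using mult_right_mono[OF _ A(1)] by blast+
  then show ?thesis using A by (simp add: abs_le_iff)
qed

lemma le_of_mutual_slope_bounds:
  fixes h T \<xi> \<eta> :: real
  assumes T: "0 \<le> T" "T < 1" and "\<xi> \<le> T * (2*h + \<eta>)" and "\<eta> \<le> T * (2*h + \<xi>)"
  shows "\<eta> \<le> 2*h*T / (1 - T)"
proof -
  have "\<eta> \<le> 2*h*T + T * (T * (2*h + \<eta>))"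
    using assms mult_left_mono[of \<xi> "T * (2*h + \<eta>)" T] by (simp add: algebra_simps)
  then have "(1 + T) * (\<eta> * (1 - T)) \<le> (1 + T) * (2*h*T)" by (simp add: algebra_simps)
  then have "\<eta> * (1 - T) \<le> 2*h*T" using T by simp
  then show ?thesis using T by (simp add: pos_le_divide_eq)
qed

text \<open>\<open>\<xi>\<close> and \<open>\<eta>\<close> are coordinates along the two perpendicular lines of sight, scaled by
  \<open>\<surd>2\<close> and centred at the target; the cameras sit at \<open>\<xi> = -2h\<close> and at \<open>\<eta> = -2h\<close>.\<close>

lemma perpendicular_sectors_dist_sq_le:
  fixes h T ap bp aq bq \<xi>1 \<eta>1 \<xi>2 \<eta>2 :: real
  assumes T: "0 \<le> T" "T < 1"
    and p: "ap \<le> 0" "0 \<le> bp" "bp - ap \<le> T" and q: "aq \<le> 0" "0 \<le> bq" "bq - aq \<le> T"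
    and 1: "in_sector ap bp (2*h + \<xi>1) (- \<eta>1)" "in_sector aq bq (2*h + \<eta>1) \<xi>1"
    and 2: "in_sector ap bp (2*h + \<xi>2) (- \<eta>2)" "in_sector aq bq (2*h + \<eta>2) \<xi>2"
  shows "(\<xi>1 - \<xi>2)^2 + (\<eta>1 - \<eta>2)^2 \<le> 2 * (2*h*T / (1 - T))^2"
proof -
  define M where "M = 2*h / (1 - T)"
  have TM: "T * M = 2*h*T / (1 - T)" by (simp add: M_def)
  have bounded: "2*h + \<xi> \<le> M \<and> 2*h + \<eta> \<le> M"
    if "in_sector ap bp (2*h + \<xi>) (- \<eta>)" "in_sector aq bq (2*h + \<eta>) \<xi>" for \<xi> \<eta>
  proof -
    have "\<xi> \<le> T * (2*h + \<eta>)" "\<eta> \<le> T * (2*h + \<xi>)"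
      using in_sector_abs_le[OF q that(2)] in_sector_abs_le[OF p that(1)] by simp_all
    then have "\<eta> \<le> 2*h*T / (1 - T)" "\<xi> \<le> 2*h*T / (1 - T)"
      using le_of_mutual_slope_bounds[OF T] by blast+
    moreover have "2*h + 2*h*T / (1 - T) = M" using T by (simp add: M_def field_simps)
    ultimately show ?thesis by linarith
  qed
  have "\<bar>\<xi>1 - \<xi>2\<bar> \<le> 2*h*T / (1 - T)"
    using in_sector_diff_le[OF q 1(2) _ 2(2), where M = M] bounded[OF 1] bounded[OF 2] TM by simp
  moreover have "\<bar>- \<eta>1 - - \<eta>2\<bar> \<le> 2*h*T / (1 - T)"
    using in_sector_diff_le[OF p 1(1) _ 2(1), where M = M] bounded[OF 1] bounded[OF 2] TM by simp
  ultimately have "(\<xi>1 - \<xi>2)^2 \<le> (2*h*T / (1 - T))^2" "(\<eta>1 - \<eta>2)^2 \<le> (2*h*T / (1 - T))^2"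
    using power_mono[OF _ abs_ge_zero, of _ _ 2] by (fastforce simp: abs_minus_commute)+
  then show ?thesis by simp
qed

lemma tan_double_bounds:
  assumes "0 \<le> \<alpha>" "\<alpha> < pi/8"
  shows "0 \<le> tan (2*\<alpha>)" and "tan (2*\<alpha>) < 1"
proof -
  show "0 \<le> tan (2*\<alpha>)" using assms by (intro tan_pos_pi2_le) auto
  have "tan (2*\<alpha>) < tan (pi/4)" using assms by (intro tan_monotone) auto
  then show "tan (2*\<alpha>) < 1" by (simp add: tan_45)
qed

lemma uncertainty_perpendicular_cameras_le:
  assumes h: "0 < h" and \<alpha>: "0 \<le> \<alpha>" "\<alpha> < pi/8"
  shows "uncertainty \<alpha> (gx, 0) {(gx - h, h), (gx + h, h)}
           \<le> ereal (2*h*tan (2*\<alpha>) / (1 - tan (2*\<alpha>)))"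
proof (rule uncertainty_le)
  define g sp sq where "g = (gx, 0::real)" and "sp = (gx - h, h)" and "sq = (gx + h, h)"
  define T where "T = tan (2*\<alpha>)"
  have T: "0 \<le> T" "T < 1" using tan_double_bounds[OF \<alpha>] by (simp_all add: T_def)
  have \<alpha>': "\<alpha> < pi/4" using \<alpha> by simp
  fix W assume "\<forall>s\<in>{(gx - h, h), (gx + h, h)}. W s \<in> wedges_through \<alpha> (gx, 0) s"
  then obtain up uq where up: "W sp = wedge \<alpha> sp up" "norm up = 1" "g \<in> wedge \<alpha> sp up"
    and uq: "W sq = wedge \<alpha> sq uq" "norm uq = 1" "g \<in> wedge \<alpha> sq uq"
    unfolding wedges_through_def g_def sp_def sq_def by auto
  have "g \<noteq> sp" "g \<noteq> sq" using h by (simp_all add: g_def sp_def sq_def)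
  obtain ap bp where p: "ap \<le> 0" "0 \<le> bp" "bp - ap \<le> tan (2*\<alpha>)"
    and in_p: "\<And>x. x \<in> wedge \<alpha> sp up \<Longrightarrow>
      in_sector ap bp ((x - sp) \<bullet> (g - sp)) ((x - sp) \<bullet> rot (g - sp))"
    using wedge_subset_sector[OF up(2,3) \<open>g \<noteq> sp\<close> \<alpha>(1) \<alpha>'] by blast
  obtain aq bq where q: "aq \<le> 0" "0 \<le> bq" "bq - aq \<le> tan (2*\<alpha>)"
    and in_q: "\<And>x. x \<in> wedge \<alpha> sq uq \<Longrightarrow>
      in_sector aq bq ((x - sq) \<bullet> (g - sq)) ((x - sq) \<bullet> rot (g - sq))"
    using wedge_subset_sector[OF uq(2,3) \<open>g \<noteq> sq\<close> \<alpha>(1) \<alpha>'] by blast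
  define \<xi> \<eta> where "\<xi> x = fst x - gx - snd x" and "\<eta> x = - (fst x - gx) - snd x" for x :: pt
  have coords: "in_sector ap bp (2*h + \<xi> x) (- \<eta> x) \<and> in_sector aq bq (2*h + \<eta> x) (\<xi> x)"
    if "x \<in> W sp" "x \<in> W sq" for x
  proof -
    have "(x - sp) \<bullet> (g - sp) = h * (2*h + \<xi> x)" "(x - sp) \<bullet> rot (g - sp) = h * (- \<eta> x)"
      "(x - sq) \<bullet> (g - sq) = h * (2*h + \<eta> x)" "(x - sq) \<bullet> rot (g - sq) = h * \<xi> x"
      by (cases x; simp add: g_def sp_def sq_def \<xi>_def \<eta>_def rot_def algebra_simps)+
    then show ?thesis using in_p that(1) in_q that(2) up(1) uq(1) in_sector_scale[OF h] by metis
  qed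
  show "ediam (\<Inter>s\<in>{(gx - h, h), (gx + h, h)}. W s) \<le> ereal (2*h*tan (2*\<alpha>) / (1 - tan (2*\<alpha>)))"
  proof (rule ediam_le)
    fix x y assume "x \<in> (\<Inter>s\<in>{(gx - h, h), (gx + h, h)}. W s)" "y \<in> (\<Inter>s\<in>{(gx - h, h), (gx + h, h)}. W s)"
    then have "x \<in> W sp" "x \<in> W sq" "y \<in> W sp" "y \<in> W sq" by (simp_all add: sp_def sq_def)
    then have "(\<xi> x - \<xi> y)^2 + (\<eta> x - \<eta> y)^2 \<le> 2 * (2*h*T / (1 - T))^2"
      using perpendicular_sectors_dist_sq_le[OF T p[folded T_def] q[folded T_def]] coords by blast
    moreover have "(dist x y)^2 = (fst x - fst y)^2 + (snd x - snd y)^2"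
      by (cases x, cases y) (simp add: dist_Pair_Pair dist_real_def)
    then have "(\<xi> x - \<xi> y)^2 + (\<eta> x - \<eta> y)^2 = 2 * (dist x y)^2"
      by (simp add: \<xi>_def \<eta>_def power2_eq_square algebra_simps)
    ultimately have "(dist x y)^2 \<le> (2*h*T / (1 - T))^2" by simp
    moreover have "0 \<le> 2*h*T / (1 - T)" using T h by simp
    ultimately show "dist x y \<le> 2*h*tan (2*\<alpha>) / (1 - tan (2*\<alpha>))"
      unfolding T_def by (rule power2_le_imp_le)
  qed
qed

lemma common_wedge:
  fixes d1 d2 s :: pt
  assumes d: "d1 \<noteq> 0" "d2 \<noteq> 0" and \<alpha>: "0 \<le> \<alpha>" "\<alpha> < pi/2"
    and angle: "cos (2*\<alpha>) * (norm d1 * norm d2) \<le> d1 \<bullet> d2"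
  obtains u where "norm u = 1" and "s + d1 \<in> wedge \<alpha> s u" and "s + d2 \<in> wedge \<alpha> s u"
proof -
  define n1 n2 where "n1 = (1 / norm d1) *\<^sub>R d1" and "n2 = (1 / norm d2) *\<^sub>R d2"
  have n: "n1 \<bullet> n1 = 1" "n2 \<bullet> n2 = 1"
    using d by (simp_all add: n1_def n2_def flip: power2_norm_eq_inner)
  have "2 * (cos \<alpha>)^2 - 1 \<le> (d1 \<bullet> d2) / (norm d1 * norm d2)"
    using angle d by (simp add: pos_le_divide_eq flip: cos_double_cos)
  then have "2 * (cos \<alpha>)^2 - 1 \<le> n1 \<bullet> n2" by (simp add: n1_def n2_def mult_ac)
  define m where "m = norm (n1 + n2)"
  have m2: "m^2 = 2 + 2 * (n1 \<bullet> n2)"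
    using n by (simp add: m_def power2_norm_eq_inner inner_add_left inner_add_right inner_commute)
  have c: "0 < cos \<alpha>" using \<alpha> by (intro cos_gt_zero_pi) auto
  have "(2 * cos \<alpha>)^2 \<le> m^2" using m2 \<open>2 * (cos \<alpha>)^2 - 1 \<le> n1 \<bullet> n2\<close> by (simp add: power_mult_distrib)
  then have m: "2 * cos \<alpha> \<le> m" by (rule power2_le_imp_le) (simp add: m_def)
  define u where "u = (1 / m) *\<^sub>R (n1 + n2)"
  have "n1 \<bullet> u = m / 2" "n2 \<bullet> u = m / 2"
    using n m2 m c by (auto simp: u_def inner_add_right inner_commute field_simps power2_eq_square)
  then have "cos \<alpha> \<le> n1 \<bullet> u" "cos \<alpha> \<le> n2 \<bullet> u" using m by simp_all
  then have "cos \<alpha> * norm d1 \<le> d1 \<bullet> u" "cos \<alpha> * norm d2 \<le> d2 \<bullet> u"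
    using d by (simp_all add: n1_def n2_def pos_le_divide_eq mult.commute)
  moreover have "norm u = 1"
  proof -
    have "0 < norm (n1 + n2)" using m c unfolding m_def by linarith
    then show ?thesis by (simp add: u_def m_def)
  qed
  ultimately show thesis using that mem_wedge_iff \<alpha> by simp
qed

lemma subtended_angle_tan_le:
  fixes h T Y :: real
  assumes h: "0 < h" and T: "0 \<le> T"
  shows "\<bar>Y\<bar> * (2*h*T*(1 + T)) \<le> T * (Y^2 + h * (h + 2*h*T*(1 + T)))"
proof (cases "T = 0")
  case False
  define t where "t = 2*h*T*(1 + T)"
  have "4*T * (T * (Y^2 + h*(h + t)) - \<bar>Y\<bar>*t) = (2*T*\<bar>Y\<bar> - t)^2 + (4*T^2*h*(h + t) - t^2)"
    by (simp add: algebra_simps power2_eq_square)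
  also have "4*T^2*h*(h + t) - t^2 = 4*h^2*T^4"
    unfolding t_def by (simp add: algebra_simps power2_eq_square power4_eq_xxxx)
  finally have "0 \<le> 4*T * (T * (Y^2 + h*(h + t)) - \<bar>Y\<bar>*t)" by simp
  then show ?thesis using T False by (simp add: zero_le_mult_iff t_def)
qed simp

lemma wedge_through_target_and_below:
  assumes h: "0 < h" and \<alpha>: "0 \<le> \<alpha>" "\<alpha> < pi/4" and s: "s \<in> viewline h"
  obtains u where "norm u = 1" and "(gx, 0) \<in> wedge \<alpha> s u"
    and "(gx, - (2*h*tan (2*\<alpha>)*(1 + tan (2*\<alpha>)))) \<in> wedge \<alpha> s u"
proof -
  define T where "T = tan (2*\<alpha>)"
  define t where "t = 2*h*T*(1 + T)"
  have T: "0 \<le> T" using \<alpha> by (simp add: T_def tan_pos_pi2_le)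
  have t: "0 \<le> t" using h T by (simp add: t_def)
  have C: "0 < cos (2*\<alpha>)" and S: "0 \<le> sin (2*\<alpha>)" using \<alpha> by (auto intro: cos_gt_zero_pi sin_ge_zero)
  obtain x0 where s: "s = (x0, h)" using s by (cases s) (simp add: viewline_def)
  define d1 d2 where "d1 = (gx - x0, - h)" and "d2 = (gx - x0, - h - t)"
  have P: "d1 \<bullet> d2 = (gx - x0)^2 + h * (h + t)" and X: "d1 \<bullet> rot d2 = (gx - x0) * t"
    by (simp_all add: d1_def d2_def rot_def power2_eq_square algebra_simps)
  have "\<bar>d1 \<bullet> rot d2\<bar> \<le> T * (d1 \<bullet> d2)"
    using subtended_angle_tan_le[OF h T, of "gx - x0"] h T unfolding P X t_def by (simp add: abs_mult)
  then have "cos (2*\<alpha>) * \<bar>d1 \<bullet> rot d2\<bar> \<le> sin (2*\<alpha>) * (d1 \<bullet> d2)"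
    using C by (simp add: T_def tan_def pos_le_divide_eq mult.commute mult.left_commute flip: divide_le_eq)
  moreover have "0 \<le> d1 \<bullet> d2" using h T by (simp add: P t_def)
  ultimately have "cos (2*\<alpha>) * (norm d1 * norm d2) \<le> d1 \<bullet> d2"
    using cos_mult_sqrt_le_iff[of "cos (2*\<alpha>)" "sin (2*\<alpha>)"] C S by (simp add: norm_mult_norm_eq)
  moreover have "d1 \<noteq> 0" "d2 \<noteq> 0" using h t by (simp_all add: d1_def d2_def zero_prod_def)
  ultimately obtain u where "norm u = 1" "s + d1 \<in> wedge \<alpha> s u" "s + d2 \<in> wedge \<alpha> s u"
    using common_wedge[of d1 d2 \<alpha> s] \<alpha> by auto
  then show thesis using that s by (simp add: d1_def d2_def t_def T_def)
qed

lemma uncertainty_viewline_ge: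
  assumes h: "0 < h" and \<alpha>: "0 \<le> \<alpha>" "\<alpha> < pi/4"
  shows "ereal (2*h*tan (2*\<alpha>)*(1 + tan (2*\<alpha>))) \<le> uncertainty \<alpha> (gx, 0) (viewline h)"
proof -
  define L where "L = 2*h*tan (2*\<alpha>)*(1 + tan (2*\<alpha>))"
  have "\<forall>s\<in>viewline h. \<exists>u. norm u = 1 \<and> (gx, 0) \<in> wedge \<alpha> s u \<and> (gx, - L) \<in> wedge \<alpha> s u"
    using wedge_through_target_and_below[OF h \<alpha>] unfolding L_def by metis
  then obtain U where U: "\<And>s. s \<in> viewline h \<Longrightarrow>
      norm (U s) = 1 \<and> (gx, 0) \<in> wedge \<alpha> s (U s) \<and> (gx, - L) \<in> wedge \<alpha> s (U s)"
    by metis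
  define W where "W s = wedge \<alpha> s (U s)" for s
  have W: "\<forall>s\<in>viewline h. W s \<in> wedges_through \<alpha> (gx, 0) s"
    using U unfolding W_def wedges_through_def by blast
  have in_W: "(gx, 0) \<in> (\<Inter>s\<in>viewline h. W s)" "(gx, - L) \<in> (\<Inter>s\<in>viewline h. W s)"
    using U by (auto simp: W_def)
  have "L = dist (gx, 0) (gx, - L)"
    using h \<alpha> by (simp add: L_def dist_Pair_Pair dist_real_def tan_pos_pi2_le)
  then have "ereal L \<le> ediam (\<Inter>s\<in>viewline h. W s)" using dist_le_ediam[OF in_W] by simp
  also have "\<dots> \<le> uncertainty \<alpha> (gx, 0) (viewline h)" using W by (rule ediam_le_uncertainty)
  finally show ?thesis unfolding L_def .
qed

lemma tan_double_le:
  fixes \<alpha> :: real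
  assumes \<alpha>: "0 \<le> \<alpha>" "\<alpha> < 1/4"
  shows "tan (2*\<alpha>) \<le> 16*\<alpha>/7"
proof -
  have "(sin \<alpha>)^2 \<le> \<alpha>^2" using abs_sin_x_le_abs_x[of \<alpha>] by (simp add: abs_le_square_iff)
  moreover have "\<alpha>^2 \<le> (1/4)^2" using \<alpha> by (intro power_mono) auto
  ultimately have "7/8 \<le> cos (2*\<alpha>)" unfolding cos_double_sin by (simp add: power2_eq_square)
  moreover have "0 \<le> sin (2*\<alpha>)" using \<alpha> pi_gt3 by (intro sin_ge_zero) auto
  moreover have "sin (2*\<alpha>) \<le> 2*\<alpha>" using \<alpha> by (intro sin_x_le_x) simp
  ultimately have "sin (2*\<alpha>) / cos (2*\<alpha>) \<le> (2*\<alpha>) / (7/8)" using \<alpha> by (intro frac_le) auto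
  then show ?thesis by (simp add: tan_def)
qed

lemma one_le_sqrt_ratio_mult:
  fixes \<alpha> T :: real
  assumes \<alpha>: "0 \<le> \<alpha>" "\<alpha> < 1/4" and T: "0 \<le> T" "T \<le> 16*\<alpha>/7"
  shows "1 \<le> sqrt ((1 + 2*\<alpha>) / (1 - 4*\<alpha>)) * (1 - T^2)"
proof -
  have "\<alpha> * (1 + 2*\<alpha>) \<le> (1/4) * (1 + 2*(1/4))" using \<alpha> by (intro mult_mono) auto
  then have "0 \<le> \<alpha> * (6 - (512/49) * (\<alpha> * (1 + 2*\<alpha>)))" using \<alpha> by simp
  also have "\<dots> = (1 + 2*\<alpha>) * (1 - 2*(16*\<alpha>/7)^2) - (1 - 4*\<alpha>)"
    by (simp add: algebra_simps power2_eq_square)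
  finally have "1 - 4*\<alpha> \<le> (1 + 2*\<alpha>) * (1 - 2*(16*\<alpha>/7)^2)" by simp
  also have "\<dots> \<le> (1 + 2*\<alpha>) * (1 - 2*T^2)"
    using T \<alpha> power_mono[OF T(2), of 2] by (intro mult_left_mono) auto
  also have "\<dots> \<le> (1 + 2*\<alpha>) * (1 - T^2)^2"
    using \<alpha> T(1) by (intro mult_left_mono) (simp_all add: power2_eq_square algebra_simps)
  finally have "1 \<le> (1 + 2*\<alpha>) / (1 - 4*\<alpha>) * (1 - T^2)^2" using \<alpha> by (simp add: field_simps)
  then have "1 \<le> sqrt ((1 + 2*\<alpha>) / (1 - 4*\<alpha>) * (1 - T^2)^2)" by (rule real_sqrt_ge_one)
  also have "\<dots> = sqrt ((1 + 2*\<alpha>) / (1 - 4*\<alpha>)) * (1 - T^2)"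
    using T \<alpha> power_mono[of T 1 2] by (simp only: real_sqrt_mult real_sqrt_abs abs_of_nonneg) simp
  finally show ?thesis .
qed

lemma perpendicular_bound_le_sqrt_ratio_mult:
  fixes h \<alpha> :: real
  assumes h: "0 < h" and \<alpha>: "0 \<le> \<alpha>" "\<alpha> < 1/4"
  defines "T \<equiv> tan (2*\<alpha>)"
  shows "2*h*T / (1 - T) \<le> sqrt ((1 + 2*\<alpha>) / (1 - 4*\<alpha>)) * (2*h*T*(1 + T))"
proof -
  define F where "F = sqrt ((1 + 2*\<alpha>) / (1 - 4*\<alpha>))"
  define U where "U = 2*h*T / (1 - T)"
  have T: "0 \<le> T" "T < 1" using tan_double_bounds[OF \<alpha>(1)] \<alpha>(2) pi_gt3 by (simp_all add: T_def)
  have U: "0 \<le> U" "U * (1 - T) = 2*h*T" using T h by (simp_all add: U_def)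
  have "U = U * 1" by simp
  also have "\<dots> \<le> U * (F * (1 - T^2))"
    using one_le_sqrt_ratio_mult[OF \<alpha> T(1)] tan_double_le[OF \<alpha>] U(1)
    by (intro mult_left_mono) (simp_all add: F_def T_def)
  also have "\<dots> = F * (U * (1 - T)) * (1 + T)" by (simp add: power2_eq_square algebra_simps)
  also have "\<dots> = F * (2*h*T*(1 + T))" by (simp only: U(2) mult.assoc)
  finally show ?thesis unfolding U_def F_def .
qed

theorem theorem1:
  fixes h \<alpha> :: real and g :: pt
  assumes "h > 0" and "0 \<le> \<alpha>" and "\<alpha> < 1/4" and "g \<in> ground"
  shows "\<exists>sp\<in>viewline h. \<exists>sq\<in>viewline h. sp \<noteq> sq \<and>
           uncertainty \<alpha> g {sp, sq}
             \<le> ereal (sqrt ((1 + 2*\<alpha>) / (1 - 4*\<alpha>))) * uncertainty \<alpha> g (viewline h)"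
proof -
  obtain gx where g: "g = (gx, 0)" using assms(4) by (cases g) (simp add: ground_def)
  define T where "T = tan (2*\<alpha>)"
  define F where "F = sqrt ((1 + 2*\<alpha>) / (1 - 4*\<alpha>))"
  have \<alpha>: "\<alpha> < pi/8" "\<alpha> < pi/4" using assms(3) pi_gt3 by simp_all
  have "uncertainty \<alpha> g {(gx - h, h), (gx + h, h)} \<le> ereal (2*h*T / (1 - T))"
    using uncertainty_perpendicular_cameras_le[OF assms(1,2) \<alpha>(1)] by (simp add: g T_def)
  also have "\<dots> \<le> ereal F * ereal (2*h*T*(1 + T))"
    using perpendicular_bound_le_sqrt_ratio_mult[OF assms(1-3)] by (simp add: T_def F_def)
  also have "\<dots> \<le> ereal F * uncertainty \<alpha> g (viewline h)"
    using uncertainty_viewline_ge[OF assms(1,2) \<alpha>(2)] assms(2,3)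
    by (intro ereal_mult_left_mono) (simp_all add: g T_def F_def)
  finally have "uncertainty \<alpha> g {(gx - h, h), (gx + h, h)} \<le> ereal F * uncertainty \<alpha> g (viewline h)" .
  moreover have "(gx - h, h) \<in> viewline h" "(gx + h, h) \<in> viewline h" "(gx - h, h) \<noteq> (gx + h, h)"
    using assms(1) by (simp_all add: viewline_def)
  ultimately show ?thesis unfolding F_def by blast
qed

end
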